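(* For every integer $n\geq 4$, $$\dot{\imath}_{[1,2]}(P_4\Box P_n)=\begin{cases} n+1 & \text{if } n\in\{5,6,9\},\\ n & \text{otherwise.}\end{cases}$$
   Context: $P_k$ denotes the path on $k$ vertices and $P_m\Box P_n$ the Cartesian product of two paths (the $m\times n$ grid graph). A set $S$ of vertices of a graph $G$ is independent if no two vertices of $S$ are adjacent, and dominating if every vertex not in $S$ has at least one neighbor in $S$. An independent $[1,2]$-set of $G$ is an independent dominating set $S$ such that every vertex $v\in V(G)\setminus S$ has at least one and at most two neighbors in $S$. When $G$ has an independent $[1,2]$-set, $\dot{\imath}_{[1,2]}(G)$ denotes the minimum cardinality of an independent $[1,2]$-set of $G$ (the statement includes the existence of such a set). *)

theory Defs
  imports Main
begin

definition indep_12_set :: "'a set \<Rightarrow> ('a \<Rightarrow> 'a \<Rightarrow> bool) \<Rightarrow> 'a set \<Rightarrow> bool" where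
  "indep_12_set V E S \<longleftrightarrow>
     S \<subseteq> V \<and>
     (\<forall>u\<in>S. \<forall>v\<in>S. \<not> E u v) \<and>
     (\<forall>v\<in>V - S. 1 \<le> card {u\<in>S. E v u} \<and> card {u\<in>S. E v u} \<le> 2)"

definition i12 :: "'a set \<Rightarrow> ('a \<Rightarrow> 'a \<Rightarrow> bool) \<Rightarrow> nat" where
  "i12 V E = Min (card ` {S. indep_12_set V E S})"

definition grid_V :: "nat \<Rightarrow> nat \<Rightarrow> (nat \<times> nat) set" where
  "grid_V m n = {0..<m} \<times> {0..<n}"

definition grid_E :: "nat \<times> nat \<Rightarrow> nat \<times> nat \<Rightarrow> bool" where
  "grid_E u v \<longleftrightarrow>
     (fst u = fst v \<and> (snd u = snd v + 1 \<or> snd v = snd u + 1)) \<or>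
     (snd u = snd v \<and> (fst u = fst v + 1 \<or> fst v = fst u + 1))"

end

theory Submission
  imports Defs
begin

text \<open>
  Cut the grid into its n columns. A column of an independent set is one of the eight independent
  subsets of P_4, and every requirement of an independent [1,2]-set at a vertex of column j involves
  only the columns j-1, j and j+1. Hence the independent [1,2]-sets are exactly the words accepted by
  a finite automaton whose states are pairs of consecutive columns, and the cardinality of a set is
  the total weight of its word. Explicit periodic words give the upper bounds. For the lower bounds
  it suffices to exhibit potentials on the states, i.e. lower bounds for weight minus length of the
  prefixes ending in a state, which are compatible with all transitions: one potential invariant
  under the transition relation yields weight \<ge> n for all n, and a sequence of nine potentials,
  one per position, yields weight \<ge> n + 1 for n = 5, 6, 9. The potentials come from dynamic
  programming over the automaton.
\<close>

type_synonym column = "bool \<times> bool \<times> bool \<times> bool"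

abbreviation col_none :: column where "col_none \<equiv> (False, False, False, False)"
abbreviation col_0 :: column where "col_0 \<equiv> (True, False, False, False)"
abbreviation col_1 :: column where "col_1 \<equiv> (False, True, False, False)"
abbreviation col_2 :: column where "col_2 \<equiv> (False, False, True, False)"
abbreviation col_3 :: column where "col_3 \<equiv> (False, False, False, True)"
abbreviation col_02 :: column where "col_02 \<equiv> (True, False, True, False)"
abbreviation col_03 :: column where "col_03 \<equiv> (True, False, False, True)"
abbreviation col_13 :: column where "col_13 \<equiv> (False, True, False, True)"

fun column_indep :: "column \<Rightarrow> bool" where
  "column_indep (b0, b1, b2, b3) \<longleftrightarrow> \<not> (b0 \<and> b1) \<and> \<not> (b1 \<and> b2) \<and> \<not> (b2 \<and> b3)"

fun weight :: "column \<Rightarrow> nat" where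
  "weight (b0, b1, b2, b3) = of_bool b0 + of_bool b1 + of_bool b2 + of_bool b3"

definition one_or_two :: "nat \<Rightarrow> bool" where
  "one_or_two k \<longleftrightarrow> 1 \<le> k \<and> k \<le> 2"

fun column_ok :: "column \<Rightarrow> column \<Rightarrow> column \<Rightarrow> bool" where
  "column_ok (a0, a1, a2, a3) (b0, b1, b2, b3) (c0, c1, c2, c3) \<longleftrightarrow>
     column_indep (b0, b1, b2, b3) \<and> column_indep (c0, c1, c2, c3) \<and>
     \<not> (a0 \<and> b0) \<and> \<not> (a1 \<and> b1) \<and> \<not> (a2 \<and> b2) \<and> \<not> (a3 \<and> b3) \<and>
     \<not> (b0 \<and> c0) \<and> \<not> (b1 \<and> c1) \<and> \<not> (b2 \<and> c2) \<and> \<not> (b3 \<and> c3) \<and>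
     (\<not> b0 \<longrightarrow> one_or_two (of_bool b1 + of_bool a0 + of_bool c0)) \<and>
     (\<not> b1 \<longrightarrow> one_or_two (of_bool b0 + of_bool b2 + of_bool a1 + of_bool c1)) \<and>
     (\<not> b2 \<longrightarrow> one_or_two (of_bool b1 + of_bool b3 + of_bool a2 + of_bool c2)) \<and>
     (\<not> b3 \<longrightarrow> one_or_two (of_bool b2 + of_bool a3 + of_bool c3))"

fun run :: "column \<times> column \<Rightarrow> column list \<Rightarrow> (column \<times> column) option" where
  "run s [] = Some s"
| "run (a, b) (c # cs) = (if column_ok a b c then run (b, c) cs else None)"

text \<open>The empty column plays the role of the missing columns before the first and after the last.\<close>

fun admissible :: "column list \<Rightarrow> bool" where
  "admissible [] \<longleftrightarrow> False"
| "admissible (c # cs) \<longleftrightarrow> column_indep c \<and>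
     (case run (col_none, c) cs of None \<Rightarrow> False | Some (a, b) \<Rightarrow> column_ok a b col_none)"

definition indep_columns :: "column list" where
  "indep_columns = [col_none, col_0, col_1, col_2, col_3, col_02, col_03, col_13]"

lemma column_indep_in_indep_columns: "column_indep c \<Longrightarrow> c \<in> set indep_columns"
  by (cases c) (auto simp: indep_columns_def)

lemma column_ok_imp_indep: "column_ok a b c \<Longrightarrow> column_indep b \<and> column_indep c"
  by (cases a; cases b; cases c) auto

lemma run_append: "run s (xs @ ys) = (case run s xs of None \<Rightarrow> None | Some t \<Rightarrow> run t ys)"
  by (induction s xs rule: run.induct) auto

lemma run_replicate_fixpoint:
  "run s blk = Some s \<Longrightarrow> run s (concat (replicate q blk)) = Some s"
  by (induction q) (auto simp: run_append)

subsection \<open>Lower bounds from potentials\<close>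

type_synonym potential = "((column \<times> column) \<times> int) list"

definition potential_step :: "potential \<Rightarrow> potential \<Rightarrow> bool" where
  "potential_step L L' \<longleftrightarrow> list_all (\<lambda>((a, b), v). list_all (\<lambda>c. column_ok a b c \<longrightarrow>
      list_ex (\<lambda>(s', v'). s' = (b, c) \<and> v' \<le> v + int (weight c) - 1) L') indep_columns) L"

definition potential_init :: "potential \<Rightarrow> bool" where
  "potential_init L \<longleftrightarrow>
     list_all (\<lambda>c. list_ex (\<lambda>(s, v). s = (col_none, c) \<and> v \<le> int (weight c) - 1) L) indep_columns"

definition potential_final :: "potential \<Rightarrow> int \<Rightarrow> bool" where
  "potential_final L t \<longleftrightarrow> list_all (\<lambda>((a, b), v). column_ok a b col_none \<longrightarrow> t \<le> v) L"

lemma potential_stepD: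
  assumes "potential_step L L'" "((a, b), v) \<in> set L" "column_ok a b c"
  obtains v' where "((b, c), v') \<in> set L'" "v' \<le> v + int (weight c) - 1"
proof -
  have "c \<in> set indep_columns"
    using column_ok_imp_indep[OF assms(3)] column_indep_in_indep_columns by blast
  with assms show thesis
    unfolding potential_step_def list_all_iff list_ex_iff
    by (fastforce simp del: column_ok.simps intro: that)
qed

lemma run_potential_bound:
  assumes "successively potential_step (L # Ls)" "(s, v) \<in> set L" "length cs = length Ls"
    "run s cs = Some t"
  shows "\<exists>v'. (t, v') \<in> set (last (L # Ls)) \<and>
    v' \<le> v + int (sum_list (map weight cs)) - int (length cs)"
  using assms
proof (induction cs arbitrary: s v L Ls)
  case Nil
  then show ?case by auto
next
  case (Cons c cs)
  obtain a b where s: "s = (a, b)" by (cases s)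
  obtain L' Ls' where Ls: "Ls = L' # Ls'" using Cons.prems(3) by (cases Ls) auto
  from Cons.prems(4) s have ok: "column_ok a b c" and run: "run (b, c) cs = Some t"
    by (auto split: if_splits)
  from Cons.prems(1) Ls have "potential_step L L'" by simp
  then obtain v' where v': "((b, c), v') \<in> set L'" "v' \<le> v + int (weight c) - 1"
    using potential_stepD Cons.prems(2) ok s by metis
  from Cons.prems(1,3) Ls have "successively potential_step (L' # Ls')" "length cs = length Ls'"
    by auto
  from Cons.IH[OF this(1) v'(1) this(2) run] v'(2) Ls show ?case by auto
qed

lemma admissible_weight_lower_bound:
  assumes "admissible w" "successively potential_step Ls" "length Ls = length w"
    "potential_init (hd Ls)" "potential_final (last Ls) t"
  shows "int (length w) + t \<le> int (sum_list (map weight w))"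
proof -
  obtain c cs where w: "w = c # cs" using assms(1) by (cases w) auto
  obtain L Ls' where Ls: "Ls = L # Ls'" using assms(3) w by (cases Ls) auto
  from assms(1) w obtain a b where
    indep: "column_indep c" and run: "run (col_none, c) cs = Some (a, b)"
    and final: "column_ok a b col_none"
    by (auto split: option.splits)
  from assms(4) Ls column_indep_in_indep_columns[OF indep] obtain v
    where v: "((col_none, c), v) \<in> set L" "v \<le> int (weight c) - 1"
    unfolding potential_init_def list_all_iff list_ex_iff by fastforce
  from assms(2,3) w Ls have "successively potential_step (L # Ls')" "length cs = length Ls'"
    by auto
  from run_potential_bound[OF this(1) v(1) this(2) run] Ls obtain v' where
    v': "((a, b), v') \<in> set (last Ls)" "v' \<le> v + int (sum_list (map weight cs)) - int (length cs)"
    by auto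
  from assms(5) v'(1) final have "t \<le> v'"
    unfolding potential_final_def list_all_iff by fastforce
  with v v' w show ?thesis by simp
qed

lemma admissible_weight_lower_bound_invariant:
  assumes "admissible w" "potential_step L L" "potential_init L" "potential_final L t"
  shows "int (length w) + t \<le> int (sum_list (map weight w))"
proof -
  have "w \<noteq> []" using assms(1) by auto
  moreover have "successively potential_step (replicate k L)" for k
    using assms(2) by (induction k rule: induct_nat_012) simp_all
  ultimately show ?thesis
    using admissible_weight_lower_bound[OF assms(1), of "replicate (length w) L"] assms(3,4)
    by (simp add: hd_replicate last_replicate)
qed

text \<open>States that no admissible prefix reaches carry no entry.\<close>

definition invariant_potential :: potential where
  "invariant_potential =
    [((col_none,col_none),-1), ((col_none,col_0),0), ((col_none,col_1),0),
     ((col_none,col_2),0), ((col_none,col_02),1), ((col_none,col_3),0), ((col_none,col_03),1),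
     ((col_none,col_13),1), ((col_0,col_2),0), ((col_0,col_3),0), ((col_0,col_13),1),
     ((col_1,col_none),-1), ((col_1,col_0),0), ((col_1,col_2),0), ((col_1,col_02),1),
     ((col_1,col_3),0), ((col_1,col_03),1), ((col_2,col_none),-1), ((col_2,col_0),0),
     ((col_2,col_1),0), ((col_2,col_3),0), ((col_2,col_03),1), ((col_2,col_13),1),
     ((col_02,col_none),0), ((col_02,col_3),1), ((col_3,col_0),0), ((col_3,col_1),0),
     ((col_3,col_02),1), ((col_03,col_none),0), ((col_03,col_1),1), ((col_03,col_2),1),
     ((col_13,col_none),0), ((col_13,col_0),1)]"

definition position_potentials :: "potential list" where
  "position_potentials =
    [[((col_none,col_none),-1), ((col_none,col_0),0), ((col_none,col_1),0),
      ((col_none,col_2),0), ((col_none,col_02),1), ((col_none,col_3),0), ((col_none,col_03),1),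
      ((col_none,col_13),1)],
     [((col_1,col_3),0), ((col_1,col_03),1), ((col_2,col_0),0), ((col_2,col_03),1),
      ((col_02,col_none),0), ((col_02,col_3),1), ((col_03,col_none),0), ((col_03,col_1),1),
      ((col_03,col_2),1), ((col_13,col_none),0), ((col_13,col_0),1)],
     [((col_none,col_02),1), ((col_none,col_13),1), ((col_0,col_2),1), ((col_0,col_3),0),
      ((col_0,col_13),1), ((col_1,col_none),0), ((col_1,col_2),1), ((col_1,col_3),1),
      ((col_2,col_none),0), ((col_2,col_0),1), ((col_2,col_1),1), ((col_3,col_0),0),
      ((col_3,col_1),1), ((col_3,col_02),1), ((col_03,col_none),0), ((col_03,col_1),1),
      ((col_03,col_2),1)],
     [((col_0,col_2),0), ((col_0,col_3),1), ((col_0,col_13),2), ((col_1,col_none),0),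
      ((col_1,col_0),1), ((col_1,col_2),1), ((col_1,col_02),2), ((col_1,col_3),1),
      ((col_1,col_03),2), ((col_2,col_none),0), ((col_2,col_0),1), ((col_2,col_1),1),
      ((col_2,col_3),1), ((col_2,col_03),2), ((col_2,col_13),2), ((col_02,col_none),0),
      ((col_02,col_3),1), ((col_3,col_0),1), ((col_3,col_1),0), ((col_3,col_02),2),
      ((col_13,col_none),0), ((col_13,col_0),1)],
     [((col_none,col_02),1), ((col_none,col_13),1), ((col_0,col_2),1), ((col_0,col_3),1),
      ((col_0,col_13),2), ((col_1,col_none),-1), ((col_1,col_0),0), ((col_1,col_2),0),
      ((col_1,col_02),1), ((col_1,col_3),0), ((col_1,col_03),1), ((col_2,col_none),-1),
      ((col_2,col_0),0), ((col_2,col_1),0), ((col_2,col_3),0), ((col_2,col_03),1),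
      ((col_2,col_13),1), ((col_02,col_none),1), ((col_3,col_0),1), ((col_3,col_1),1),
      ((col_3,col_02),2), ((col_03,col_none),1), ((col_03,col_1),2), ((col_03,col_2),2),
      ((col_13,col_none),1)],
     [((col_none,col_02),2), ((col_none,col_13),2), ((col_0,col_2),1), ((col_0,col_3),0),
      ((col_0,col_13),1), ((col_1,col_none),0), ((col_1,col_0),1), ((col_1,col_2),1),
      ((col_1,col_02),2), ((col_1,col_3),0), ((col_1,col_03),1), ((col_2,col_none),0),
      ((col_2,col_0),0), ((col_2,col_1),1), ((col_2,col_3),1), ((col_2,col_03),1),
      ((col_2,col_13),2), ((col_02,col_none),0), ((col_02,col_3),1), ((col_3,col_0),0),
      ((col_3,col_1),1), ((col_3,col_02),1), ((col_03,col_none),0), ((col_03,col_1),1),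
      ((col_03,col_2),1), ((col_13,col_none),0), ((col_13,col_0),1)],
     [((col_none,col_02),1), ((col_none,col_13),1), ((col_0,col_2),0), ((col_0,col_3),0),
      ((col_0,col_13),1), ((col_1,col_none),0), ((col_1,col_0),1), ((col_1,col_2),1),
      ((col_1,col_02),2), ((col_1,col_3),1), ((col_1,col_03),2), ((col_2,col_none),0),
      ((col_2,col_0),1), ((col_2,col_1),1), ((col_2,col_3),1), ((col_2,col_03),2),
      ((col_2,col_13),2), ((col_02,col_none),0), ((col_02,col_3),2), ((col_3,col_0),0),
      ((col_3,col_1),0), ((col_3,col_02),1), ((col_03,col_none),0), ((col_03,col_1),1),
      ((col_03,col_2),1), ((col_13,col_none),0), ((col_13,col_0),2)],
     [((col_none,col_02),1), ((col_none,col_13),1), ((col_0,col_2),0), ((col_0,col_3),1),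
      ((col_0,col_13),2), ((col_1,col_none),-1), ((col_1,col_0),0), ((col_1,col_2),0),
      ((col_1,col_02),1), ((col_1,col_3),0), ((col_1,col_03),1), ((col_2,col_none),-1),
      ((col_2,col_0),0), ((col_2,col_1),0), ((col_2,col_3),0), ((col_2,col_03),1),
      ((col_2,col_13),1), ((col_02,col_none),0), ((col_02,col_3),1), ((col_3,col_0),1),
      ((col_3,col_1),0), ((col_3,col_02),2), ((col_03,col_none),1), ((col_03,col_1),2),
      ((col_03,col_2),2), ((col_13,col_none),0), ((col_13,col_0),1)],
     [((col_none,col_02),1), ((col_none,col_13),1), ((col_0,col_2),1), ((col_0,col_3),0),
      ((col_0,col_13),1), ((col_1,col_none),-1), ((col_1,col_0),0), ((col_1,col_2),0),
      ((col_1,col_02),1), ((col_1,col_3),0), ((col_1,col_03),1), ((col_2,col_none),-1),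
      ((col_2,col_0),0), ((col_2,col_1),0), ((col_2,col_3),0), ((col_2,col_03),1),
      ((col_2,col_13),1), ((col_02,col_none),0), ((col_02,col_3),1), ((col_3,col_0),0),
      ((col_3,col_1),1), ((col_3,col_02),1), ((col_03,col_none),0), ((col_03,col_1),1),
      ((col_03,col_2),1), ((col_13,col_none),0), ((col_13,col_0),1)]]"

lemma admissible_weight_ge_length:
  assumes "admissible w"
  shows "length w \<le> sum_list (map weight w)"
proof -
  have "potential_step invariant_potential invariant_potential"
    by (simp add: potential_step_def invariant_potential_def indep_columns_def one_or_two_def)
  moreover have "potential_init invariant_potential"
    by (simp add: potential_init_def invariant_potential_def indep_columns_def)
  moreover have "potential_final invariant_potential 0"
    by (simp add: potential_final_def invariant_potential_def one_or_two_def)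
  ultimately show ?thesis
    using admissible_weight_lower_bound_invariant[OF assms] by fastforce
qed

lemma admissible_weight_gt_length_exceptional:
  assumes "admissible w" "length w \<in> {5, 6, 9}"
  shows "length w < sum_list (map weight w)"
proof -
  let ?Ls = "take (length w) position_potentials"
  have "successively potential_step position_potentials"
    by (simp add: potential_step_def position_potentials_def indep_columns_def one_or_two_def)
  then have "successively potential_step ?Ls"
    by (metis append_take_drop_id successively_append_iff)
  moreover have "length ?Ls = length w"
    using assms(2) by (auto simp: position_potentials_def)
  moreover have "potential_init (hd ?Ls)"
    using assms(2) by (auto simp: potential_init_def position_potentials_def indep_columns_def)
  moreover have "potential_final (last ?Ls) 1"
    using assms(2) by (auto simp: potential_final_def position_potentials_def one_or_two_def)
  ultimately show ?thesis
    using admissible_weight_lower_bound[OF assms(1)] by fastforce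
qed

subsection \<open>Independent [1,2]-sets of the grid as admissible words\<close>

definition column_of :: "(nat \<times> nat) set \<Rightarrow> nat \<Rightarrow> column" where
  "column_of S j = ((0, j) \<in> S, (1, j) \<in> S, (2, j) \<in> S, (3, j) \<in> S)"

definition prev_column :: "(nat \<Rightarrow> column) \<Rightarrow> nat \<Rightarrow> column" where
  "prev_column f j = (if j = 0 then col_none else f (j - 1))"

lemma run_map_upt:
  assumes "n \<ge> 1"
  shows "run (col_none, f 0) (map f [1..<n]) =
    (if \<forall>j. Suc j < n \<longrightarrow> column_ok (prev_column f j) (f j) (f (Suc j))
     then Some (prev_column f (n - 1), f (n - 1)) else None)"
  using assms
proof (induction n rule: nat_induct_at_least)
  case base
  then show ?case by (simp add: prev_column_def)
next
  case (Suc n)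
  have upt: "[1..<Suc n] = [1..<n] @ [n]" using Suc.hyps by simp
  have all: "(\<forall>j. Suc j < Suc n \<longrightarrow> P j) \<longleftrightarrow> (\<forall>j. Suc j < n \<longrightarrow> P j) \<and> P (n - 1)" for P
    using Suc.hyps by (auto simp: less_Suc_eq)
  have "prev_column f n = f (n - 1)" using Suc.hyps by (simp add: prev_column_def)
  then show ?case unfolding upt map_append run_append Suc.IH all using Suc.hyps
    by (auto simp: Suc_pred')
qed

lemma admissible_map_upt_iff:
  assumes "n \<ge> 1" "f n = col_none"
  shows "admissible (map f [0..<n]) \<longleftrightarrow> (\<forall>j<n. column_ok (prev_column f j) (f j) (f (Suc j)))"
proof -
  have map: "map f [0..<n] = f 0 # map f [1..<n]"
    using assms(1) by (simp add: upt_conv_Cons)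
  have all: "(\<forall>j<n. P j) \<longleftrightarrow> (\<forall>j. Suc j < n \<longrightarrow> P j) \<and> P (n - 1)" for P
    using assms(1) by (metis Suc_pred' diff_less le_less_trans less_Suc_eq zero_less_one not_less_eq)
  have last: "f (Suc (n - 1)) = col_none" using assms by simp
  show ?thesis unfolding map admissible.simps run_map_upt[OF assms(1)] all last
    using assms(1) by (auto simp: prev_column_def dest: column_ok_imp_indep)
qed

lemma card_grid_neighbours:
  "card {u \<in> S. grid_E (i, j) u} =
     of_bool ((Suc i, j) \<in> S) + of_bool (0 < i \<and> (i - 1, j) \<in> S) +
     of_bool ((i, Suc j) \<in> S) + of_bool (0 < j \<and> (i, j - 1) \<in> S)"
proof (cases i; cases j)
  assume "i = 0" "j = 0"
  then have "{u \<in> S. grid_E (i, j) u} = S \<inter> {(Suc i, j), (i, Suc j)}"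
    by (auto simp: grid_E_def)
  then show ?thesis using \<open>i = 0\<close> \<open>j = 0\<close> by (simp add: Int_insert_right card_insert_if)
next
  fix b assume "i = 0" "j = Suc b"
  then have "{u \<in> S. grid_E (i, j) u} = S \<inter> {(Suc i, j), (i, Suc j), (i, b)}"
    by (auto simp: grid_E_def)
  then show ?thesis using \<open>i = 0\<close> \<open>j = Suc b\<close> by (simp add: Int_insert_right card_insert_if)
next
  fix a assume "i = Suc a" "j = 0"
  then have "{u \<in> S. grid_E (i, j) u} = S \<inter> {(Suc i, j), (i, Suc j), (a, j)}"
    by (auto simp: grid_E_def)
  then show ?thesis using \<open>i = Suc a\<close> \<open>j = 0\<close> by (simp add: Int_insert_right card_insert_if)
next
  fix a b assume "i = Suc a" "j = Suc b"
  then have "{u \<in> S. grid_E (i, j) u} = S \<inter> {(Suc i, j), (i, Suc j), (a, j), (i, b)}"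
    by (auto simp: grid_E_def)
  then show ?thesis using \<open>i = Suc a\<close> \<open>j = Suc b\<close> by (simp add: Int_insert_right card_insert_if)
qed

lemma all_less_Suc_iff: "(\<forall>i<Suc n. P i) \<longleftrightarrow> P n \<and> (\<forall>i<n. P i)"
  by (auto simp: less_Suc_eq)

lemma column_ok_column_of_iff:
  "column_ok (prev_column (column_of S) j) (column_of S j) (column_of S (Suc j)) \<longleftrightarrow>
     (\<forall>i<3. \<not> ((i, j) \<in> S \<and> (Suc i, j) \<in> S)) \<and>
     (\<forall>i<3. \<not> ((i, Suc j) \<in> S \<and> (Suc i, Suc j) \<in> S)) \<and>
     (\<forall>i<4. \<not> (0 < j \<and> (i, j - 1) \<in> S \<and> (i, j) \<in> S)) \<and>
     (\<forall>i<4. \<not> ((i, j) \<in> S \<and> (i, Suc j) \<in> S)) \<and>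
     (\<forall>i<4. (i, j) \<notin> S \<longrightarrow> one_or_two
        (of_bool (i < 3 \<and> (Suc i, j) \<in> S) + of_bool (0 < i \<and> (i - 1, j) \<in> S) +
         of_bool ((i, Suc j) \<in> S) + of_bool (0 < j \<and> (i, j - 1) \<in> S)))"
  by (cases j) (simp_all add: all_less_Suc_iff prev_column_def column_of_def one_or_two_def
      One_nat_def numeral_eq_Suc)

lemma grid_independent_iff:
  "(\<forall>u\<in>S. \<forall>v\<in>S. \<not> grid_E u v) \<longleftrightarrow> (\<forall>i j. (i, j) \<in> S \<longrightarrow> (Suc i, j) \<notin> S \<and> (i, Suc j) \<notin> S)"
  unfolding grid_E_def by fastforce

lemma grid_independent_iff_columns:
  assumes "S \<subseteq> grid_V 4 n"
  shows "(\<forall>i j. (i, j) \<in> S \<longrightarrow> (Suc i, j) \<notin> S \<and> (i, Suc j) \<notin> S) \<longleftrightarrow>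
    (\<forall>j<n. (\<forall>i<3. \<not> ((i, j) \<in> S \<and> (Suc i, j) \<in> S)) \<and>
       (\<forall>i<3. \<not> ((i, Suc j) \<in> S \<and> (Suc i, Suc j) \<in> S)) \<and>
       (\<forall>i<4. \<not> (0 < j \<and> (i, j - 1) \<in> S \<and> (i, j) \<in> S)) \<and>
       (\<forall>i<4. \<not> ((i, j) \<in> S \<and> (i, Suc j) \<in> S)))"
    (is "?indep \<longleftrightarrow> ?columns")
proof
  assume indep: ?indep
  have "(i, j - 1) \<notin> S" if "0 < j" "(i, j) \<in> S" for i j
    using indep[rule_format, of i "j - 1"] that by auto
  with indep show ?columns by blast
next
  assume columns: ?columns
  have in_grid: "(i, j) \<in> S \<Longrightarrow> i < 4 \<and> j < n" for i j
    using assms by (auto simp: grid_V_def)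
  show ?indep
  proof (intro allI impI)
    fix i j assume "(i, j) \<in> S"
    with in_grid[of i j] in_grid[of "Suc i" j] columns
    show "(Suc i, j) \<notin> S \<and> (i, Suc j) \<notin> S" by fastforce
  qed
qed

lemma indep_12_set_iff_column_ok:
  assumes "S \<subseteq> grid_V 4 n"
  shows "indep_12_set (grid_V 4 n) grid_E S \<longleftrightarrow>
    (\<forall>j<n. column_ok (prev_column (column_of S) j) (column_of S j) (column_of S (Suc j)))"
proof -
  have in_grid: "(i, j) \<in> S \<Longrightarrow> i < 4 \<and> j < n" for i j
    using assms by (auto simp: grid_V_def)
  have neighbours: "card {u \<in> S. grid_E (i, j) u} =
     of_bool (i < 3 \<and> (Suc i, j) \<in> S) + of_bool (0 < i \<and> (i - 1, j) \<in> S) +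
     of_bool ((i, Suc j) \<in> S) + of_bool (0 < j \<and> (i, j - 1) \<in> S)" for i j
    unfolding card_grid_neighbours using in_grid[of "Suc i" j] by auto
  have "(\<forall>v\<in>grid_V 4 n - S. 1 \<le> card {u \<in> S. grid_E v u} \<and> card {u \<in> S. grid_E v u} \<le> 2) \<longleftrightarrow>
     (\<forall>j<n. \<forall>i<4. (i, j) \<notin> S \<longrightarrow> one_or_two (card {u \<in> S. grid_E (i, j) u}))"
    by (auto simp: grid_V_def one_or_two_def)
  then show ?thesis
    unfolding indep_12_set_def grid_independent_iff grid_independent_iff_columns[OF assms]
      column_ok_column_of_iff neighbours
    using assms by blast
qed

lemma card_eq_sum_weight_columns:
  assumes "S \<subseteq> grid_V 4 n"
  shows "card S = (\<Sum>j<n. weight (column_of S j))"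
proof -
  have "card S = (\<Sum>x\<in>grid_V 4 n. of_bool (x \<in> S))"
    using assms by (simp add: grid_V_def Int_absorb1)
  also have "\<dots> = (\<Sum>i<4. \<Sum>j<n. of_bool ((i, j) \<in> S))"
    by (simp add: grid_V_def atLeast0LessThan sum.cartesian_product del: sum_of_bool_eq)
  also have "\<dots> = (\<Sum>j<n. \<Sum>i<4. of_bool ((i, j) \<in> S))"
    by (rule sum.swap)
  also have "\<dots> = (\<Sum>j<n. weight (column_of S j))"
    by (simp add: column_of_def numeral_eq_Suc del: sum_of_bool_eq)
  finally show ?thesis .
qed

fun row :: "nat \<Rightarrow> column \<Rightarrow> bool" where
  "row i (b0, b1, b2, b3) = (if i = 0 then b0 else if i = 1 then b1 else if i = 2 then b2 else b3)"

definition set_of_word :: "column list \<Rightarrow> (nat \<times> nat) set" where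
  "set_of_word w = {(i, j). j < length w \<and> i < 4 \<and> row i (w ! j)}"

lemma column_of_set_of_word:
  "column_of (set_of_word w) j = (if j < length w then w ! j else col_none)"
  by (cases "w ! j") (auto simp: column_of_def set_of_word_def)

lemma set_of_word_subset: "set_of_word w \<subseteq> grid_V 4 (length w)"
  by (auto simp: set_of_word_def grid_V_def)

lemma indep_12_set_of_word:
  assumes "admissible w"
  shows "indep_12_set (grid_V 4 (length w)) grid_E (set_of_word w)"
    and "card (set_of_word w) = sum_list (map weight w)"
proof -
  let ?f = "column_of (set_of_word w)"
  have "length w \<ge> 1" using assms by (cases w) auto
  moreover have "map ?f [0..<length w] = w"
    by (rule nth_equalityI) (auto simp: column_of_set_of_word)
  ultimately show "indep_12_set (grid_V 4 (length w)) grid_E (set_of_word w)"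
    using assms admissible_map_upt_iff[of "length w" ?f]
    by (simp add: indep_12_set_iff_column_ok[OF set_of_word_subset] column_of_set_of_word)
  have "card (set_of_word w) = (\<Sum>j<length w. weight (?f j))"
    by (rule card_eq_sum_weight_columns[OF set_of_word_subset])
  also have "\<dots> = sum_list (map weight w)"
    by (simp add: column_of_set_of_word sum_list_sum_nth atLeast0LessThan)
  finally show "card (set_of_word w) = sum_list (map weight w)" .
qed

lemma admissible_columns_of_indep_12_set:
  assumes "indep_12_set (grid_V 4 n) grid_E S" "n \<ge> 1"
  shows "admissible (map (column_of S) [0..<n])"
    and "card S = sum_list (map weight (map (column_of S) [0..<n]))"
proof -
  have sub: "S \<subseteq> grid_V 4 n" using assms(1) by (simp add: indep_12_set_def)
  then have "column_of S n = col_none" by (auto simp: column_of_def grid_V_def)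
  then show "admissible (map (column_of S) [0..<n])"
    using admissible_map_upt_iff[OF assms(2)] indep_12_set_iff_column_ok[OF sub] assms(1) by simp
  show "card S = sum_list (map weight (map (column_of S) [0..<n]))"
    by (simp add: card_eq_sum_weight_columns[OF sub] sum_list_sum_nth atLeast0LessThan)
qed

subsection \<open>Optimal words\<close>

lemma length_concat_replicate: "length (concat (replicate k xs)) = k * length xs"
  by (induction k) auto

lemma admissible_singleton_word_periodic:
  assumes "t \<in> {[col_0, col_3, col_1], [col_0, col_3, col_1, col_3, col_0, col_2],
                [col_0, col_3, col_1, col_3, col_0, col_2, col_0, col_3, col_1]}"
  shows "\<exists>w. length w = 4 + 4 * q + length t \<and> admissible w \<and>
    set w \<subseteq> {col_0, col_1, col_2, col_3}"
proof -
  let ?B = "[col_0, col_3, col_1, col_2]"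
  let ?w = "col_1 # [col_3, col_0, col_2] @ concat (replicate q ?B) @ t"
  have enter: "run (col_0, col_2) ?B = Some (col_1, col_2)"
    and stay: "run (col_1, col_2) ?B = Some (col_1, col_2)"
    by (simp_all add: one_or_two_def)
  obtain s where s: "s \<in> {(col_0, col_2), (col_1, col_2)}"
    and periodic: "run (col_0, col_2) (concat (replicate q ?B)) = Some s"
  proof (cases q)
    case (Suc k)
    then have "concat (replicate q ?B) = ?B @ concat (replicate k ?B)" by simp
    then have "run (col_0, col_2) (concat (replicate q ?B)) = Some (col_1, col_2)"
      using run_replicate_fixpoint[OF stay] unfolding run_append enter
      by (simp add: one_or_two_def)
    then show thesis by (rule that[rotated]) simp
  qed (rule that[of "(col_0, col_2)"], simp_all)
  have "\<exists>a b. run s t = Some (a, b) \<and> column_ok a b col_none"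
    using s assms by (elim insertE emptyE) (simp_all add: one_or_two_def)
  then obtain a b where final: "run s t = Some (a, b)" "column_ok a b col_none" by blast
  have "run (col_none, col_1) [col_3, col_0, col_2] = Some (col_0, col_2)"
    by (simp add: one_or_two_def)
  then have "run (col_none, col_1) ([col_3, col_0, col_2] @ concat (replicate q ?B) @ t) = Some (a, b)"
    by (simp only: run_append periodic final option.case)
  then have "admissible ?w"
    by (simp only: admissible.simps option.case prod.case final(2)) simp
  moreover have "length ?w = 4 + 4 * q + length t" by (simp add: length_concat_replicate)
  moreover have "set ?w \<subseteq> {col_0, col_1, col_2, col_3}"
    using assms by (elim insertE emptyE) (simp_all add: set_replicate_conv_if)
  ultimately show ?thesis by blast
qed

lemma admissible_singleton_word_mult_4:
  "\<exists>w. length w = 4 * Suc q \<and> admissible w \<and> set w \<subseteq> {col_0, col_1, col_2, col_3}"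
proof -
  let ?A = "[col_1, col_3, col_0, col_2]"
  have "run (col_0, col_2) ?A = Some (col_0, col_2)"
    by (simp add: one_or_two_def)
  then have "admissible (concat (replicate (Suc q) ?A))"
    by (simp add: run_append run_replicate_fixpoint one_or_two_def)
  moreover have "length (concat (replicate (Suc q) ?A)) = 4 * Suc q"
    by (simp only: length_concat_replicate) simp
  moreover have "set (concat (replicate (Suc q) ?A)) \<subseteq> {col_0, col_1, col_2, col_3}"
    by auto
  ultimately show ?thesis by blast
qed

lemma admissible_singleton_word:
  assumes "n \<ge> 4" "n \<notin> {5, 6, 9}"
  shows "\<exists>w. length w = n \<and> admissible w \<and> set w \<subseteq> {col_0, col_1, col_2, col_3}"
proof -
  have n: "n \<ge> 4" "n \<noteq> 5" "n \<noteq> 6" "n \<noteq> 9" using assms by auto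
  have "n mod 4 < 4" by simp
  then consider "n mod 4 = 0" | "n mod 4 = 1" | "n mod 4 = 2" | "n mod 4 = 3" by linarith
  then show ?thesis
  proof cases
    case 1
    then have "\<exists>q. n = 4 * Suc q" using n by presburger
    then show ?thesis using admissible_singleton_word_mult_4 by metis
  next
    case 2
    then have "\<exists>q. n = 4 + 4 * q + 9" using n by presburger
    then show ?thesis using admissible_singleton_word_periodic[of
        "[col_0, col_3, col_1, col_3, col_0, col_2, col_0, col_3, col_1]"] by auto
  next
    case 3
    then have "\<exists>q. n = 4 + 4 * q + 6" using n by presburger
    then show ?thesis
      using admissible_singleton_word_periodic[of "[col_0, col_3, col_1, col_3, col_0, col_2]"] by auto
  next
    case 4
    then have "\<exists>q. n = 4 + 4 * q + 3" using n by presburger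
    then show ?thesis using admissible_singleton_word_periodic[of "[col_0, col_3, col_1]"] by auto
  qed
qed

lemma admissible_word_of_weight:
  assumes "n \<ge> 4"
  shows "\<exists>w. length w = n \<and> admissible w \<and>
    sum_list (map weight w) = (if n \<in> {5, 6, 9} then n + 1 else n)"
proof (cases "n \<in> {5, 6, 9}")
  case True
  then consider "n = 5" | "n = 6" | "n = 9" by auto
  then show ?thesis
  proof cases
    case 1
    then show ?thesis
      by (intro exI[of _ "[col_1, col_3, col_0, col_2, col_03]"]) (simp add: one_or_two_def)
  next
    case 2
    then show ?thesis
      by (intro exI[of _ "[col_1, col_3, col_0, col_2, col_0, col_13]"]) (simp add: one_or_two_def)
  next
    case 3
    then show ?thesis
      by (intro exI[of _ "[col_1, col_3, col_0, col_2, col_0, col_3, col_1, col_2, col_03]"])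
        (simp add: one_or_two_def)
  qed
next
  case False
  then obtain w where "length w = n" "admissible w" "set w \<subseteq> {col_0, col_1, col_2, col_3}"
    using admissible_singleton_word[OF assms] by blast
  moreover have "sum_list (map weight w) = length w" if "set w \<subseteq> {col_0, col_1, col_2, col_3}"
    using that by (induction w) auto
  ultimately show ?thesis using False by auto
qed

theorem mainTheorem5:
  fixes n :: nat
  assumes "n \<ge> 4"
  shows "(\<exists>S. indep_12_set (grid_V 4 n) grid_E S) \<and>
         i12 (grid_V 4 n) grid_E = (if n \<in> {5, 6, 9} then n + 1 else n)"
proof -
  define m where "m = (if n \<in> {5, 6, 9} then n + 1 else n)"
  let ?sets = "{S. indep_12_set (grid_V 4 n) grid_E S}"
  obtain w where w: "length w = n" "admissible w" "sum_list (map weight w) = m"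
    using admissible_word_of_weight[OF assms] unfolding m_def by blast
  then have witness: "set_of_word w \<in> ?sets" "card (set_of_word w) = m"
    using indep_12_set_of_word[OF w(2)] by auto
  have lower: "m \<le> card S" if "S \<in> ?sets" for S
    using admissible_columns_of_indep_12_set[of n S] that assms
      admissible_weight_ge_length admissible_weight_gt_length_exceptional
    unfolding m_def by (fastforce simp del: map_map)
  have "finite ?sets"
    by (rule finite_subset[of _ "Pow (grid_V 4 n)"]) (auto simp: indep_12_set_def grid_V_def)
  then have "i12 (grid_V 4 n) grid_E = m"
    unfolding i12_def using witness lower by (intro Min_eqI) auto
  with witness show ?thesis unfolding m_def by blast
qed

end
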